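(* Suppose $t=t(n)=\alpha_0(n)+O(1)$ is an integer. Uniformly over all $k\le n/2$ with $k=n/(t-\Theta(1))$, we have (partial derivatives with $t$ held fixed) \[ \frac{\partial}{\partial k}\hat L_0(n,k,t)=\Theta\Big(\frac{\log^3n}{n}\Big),\qquad \frac{\partial}{\partial n}\hat L_0(n,k,t)=-\Theta\Big(\frac{\log^2 n}{n}\Big), \] and \[ \frac{\partial}{\partial k}L_0(n,k,t)=\frac{2}{\log2}\log^2n+O(\log n\log\log n). \]
   Context: $\alpha_0(n)=2\log_2 n-2\log_2\log_2 n+2\log_2(e/2)+1$, $d_i=2^{\binom i2}i!$. For positive integer $t$ and reals $\rho\in(1,t)$, $k>0$: $\tilde L_0(\rho,k,t)=\sup\{\rho\log(\rho k)-\log k-\rho+1-\sum_{i=1}^tp_i\log(p_id_i)\}$, the supremum over $(p_i)_{i=1}^t\in[0,1]^t$ with $\sum_ip_i=1$, $\sum_iip_i=\rho$ (with $0\log0=0$); $\hat L_0(n,k,t)=\tilde L_0(n/k,k,t)$ and $L_0(n,k,t)=k\,\hat L_0(n,k,t)$. Logarithms are natural. *)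

theory Defs
  imports "HOL-Analysis.Analysis"
begin

definition alpha0 :: "real \<Rightarrow> real" where
  "alpha0 n = 2 * log 2 n - 2 * log 2 (log 2 n) + 2 * log 2 (exp 1 / 2) + 1"

definition dd :: "nat \<Rightarrow> real" where
  "dd i = 2 powr (real (i choose 2)) * fact i"

definition plogpd :: "real \<Rightarrow> nat \<Rightarrow> real" where
  "plogpd p i = (if p = 0 then 0 else p * ln (p * dd i))"

definition Ltilde0 :: "real \<Rightarrow> real \<Rightarrow> nat \<Rightarrow> real" where
  "Ltilde0 \<rho> k t = Sup ((\<lambda>p. \<rho> * ln (\<rho> * k) - ln k - \<rho> + 1 - (\<Sum>i=1..t. plogpd (p i) i)) `
      {p :: nat \<Rightarrow> real. (\<forall>i\<in>{1..t}. 0 \<le> p i \<and> p i \<le> 1) \<and> (\<Sum>i=1..t. p i) = 1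
                         \<and> (\<Sum>i=1..t. real i * p i) = \<rho>})"

definition Lhat0 :: "real \<Rightarrow> real \<Rightarrow> nat \<Rightarrow> real" where
  "Lhat0 n k t = Ltilde0 (n / k) k t"

definition L0 :: "real \<Rightarrow> real \<Rightarrow> nat \<Rightarrow> real" where
  "L0 n k t = k * Lhat0 n k t"

end

(*
  The supremum defining Ltilde0 is attained by the Gibbs distribution
  p_i = e^(s i) / (d_i Z(s)) on {1..t}, where Z(s) = sum_i e^(s i) / d_i and the tilt s is fixed by
  the mean constraint sum_i i p_i = rho (Gibbs' inequality). Hence
  Ltilde0 = rho log (rho k) - log k - rho + 1 + G(rho) with G(rho) = log Z(s) - s rho, the Legendre
  transform of log Z, so that G'(rho) = -s. This gives the partial derivatives in closed form:
  d/dn Lhat0 = (log n - s) / k,  d/dk Lhat0 = (n / k^2) (s - log n + 1) - 1 / k,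
  d/dk L0 = log Z(s) - log k.
  Since d_(i+1) / d_i = 2^i (i + 1), a mean rho = t - Theta(1) forces
  (t - O(1)) log 2 <= s <= (t - 1) log 2 + log t + O(1). With t log 2 = 2 log n - 2 log log n + O(1)
  this gives rho = Theta(log n), s - log n = Theta(log n) and
  log Z(s) = (t log 2)^2 / (2 log 2) + O(log n log log n) = 2 log^2 n / log 2 + O(log n log log n).
*)

theory Submission
  imports Defs "HOL-Real_Asymp.Real_Asymp"
begin

section \<open>Gibbs distributions on {1..T}\<close>

definition gibbs_weight :: "real \<Rightarrow> nat \<Rightarrow> real" where
  "gibbs_weight s i = exp (s * real i) / dd i"

definition gibbs_moment :: "nat \<Rightarrow> nat \<Rightarrow> real \<Rightarrow> real" where
  "gibbs_moment j T s = (\<Sum>i=1..T. real i ^ j * gibbs_weight s i)"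

abbreviation gibbs_Z :: "nat \<Rightarrow> real \<Rightarrow> real" where
  "gibbs_Z T \<equiv> gibbs_moment 0 T"

definition gibbs_prob :: "nat \<Rightarrow> real \<Rightarrow> nat \<Rightarrow> real" where
  "gibbs_prob T s i = gibbs_weight s i / gibbs_Z T s"

definition gibbs_mean :: "nat \<Rightarrow> real \<Rightarrow> real" where
  "gibbs_mean T s = gibbs_moment 1 T s / gibbs_Z T s"

lemma dd_pos: "0 < dd i"
  unfolding dd_def by simp

lemma gibbs_weight_pos: "0 < gibbs_weight s i"
  unfolding gibbs_weight_def using dd_pos by simp

lemma gibbs_Z_pos: "1 \<le> T \<Longrightarrow> 0 < gibbs_Z T s"
  unfolding gibbs_moment_def using gibbs_weight_pos by (intro sum_pos) auto

lemma gibbs_prob_pos: "1 \<le> T \<Longrightarrow> 0 < gibbs_prob T s i"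
  unfolding gibbs_prob_def using gibbs_weight_pos gibbs_Z_pos by simp

lemma sum_gibbs_prob: "1 \<le> T \<Longrightarrow> (\<Sum>i=1..T. gibbs_prob T s i) = 1"
  using gibbs_Z_pos[of T s] unfolding gibbs_prob_def gibbs_moment_def
  by (simp add: sum_divide_distrib[symmetric])

lemma sum_gibbs_prob_mean: "(\<Sum>i=1..T. real i * gibbs_prob T s i) = gibbs_mean T s"
  unfolding gibbs_prob_def gibbs_mean_def gibbs_moment_def by (simp add: sum_divide_distrib)

lemma ln_gibbs_prob: "1 \<le> T \<Longrightarrow> ln (gibbs_prob T s i * dd i) = s * real i - ln (gibbs_Z T s)"
  using gibbs_Z_pos[of T s] dd_pos[of i]
  by (simp add: gibbs_prob_def gibbs_weight_def ln_div)

lemma plogpd_ge: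
  assumes "0 \<le> p" "0 < q"
  shows "p * ln (q * dd i) - plogpd p i \<le> q - p"
proof (cases "p = 0")
  case True
  then show ?thesis using assms by (simp add: plogpd_def)
next
  case False
  then have p: "0 < p" using assms by simp
  have "p * ln (q * dd i) - plogpd p i = p * ln (q / p)"
    using p assms dd_pos[of i] by (simp add: plogpd_def ln_mult ln_div algebra_simps)
  also have "\<dots> \<le> p * (q / p - 1)"
    using p assms by (intro mult_left_mono ln_le_minus_one) auto
  finally show ?thesis using p by (simp add: algebra_simps)
qed

lemma gibbs_inequality:
  assumes T: "1 \<le> T" and p: "\<forall>i\<in>{1..T}. 0 \<le> p i" "(\<Sum>i=1..T. p i) = 1"
    and mean: "(\<Sum>i=1..T. real i * p i) = \<rho>"
  shows "- (\<Sum>i=1..T. plogpd (p i) i) \<le> ln (gibbs_Z T s) - s * \<rho>"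
proof -
  have "(\<Sum>i=1..T. p i * ln (gibbs_prob T s i * dd i))
      = (\<Sum>i=1..T. s * (real i * p i) - ln (gibbs_Z T s) * p i)"
    unfolding ln_gibbs_prob[OF T] by (simp add: algebra_simps)
  also have "\<dots> = s * \<rho> - ln (gibbs_Z T s)"
    using p(2) mean by (simp add: sum_subtractf sum_distrib_left[symmetric])
  finally have "(\<Sum>i=1..T. p i * ln (gibbs_prob T s i * dd i)) = s * \<rho> - ln (gibbs_Z T s)" .
  moreover have "(\<Sum>i=1..T. p i * ln (gibbs_prob T s i * dd i) - plogpd (p i) i)
      \<le> (\<Sum>i=1..T. gibbs_prob T s i - p i)"
    using p(1) gibbs_prob_pos[OF T] by (intro sum_mono plogpd_ge) auto
  moreover have "(\<Sum>i=1..T. gibbs_prob T s i - p i) = 0"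
    using sum_gibbs_prob[OF T] p(2) by (simp add: sum_subtractf)
  ultimately show ?thesis by (simp add: sum_subtractf)
qed

lemma gibbs_entropy:
  assumes T: "1 \<le> T"
  shows "- (\<Sum>i=1..T. plogpd (gibbs_prob T s i) i) = ln (gibbs_Z T s) - s * gibbs_mean T s"
proof -
  have "(\<Sum>i=1..T. plogpd (gibbs_prob T s i) i)
      = (\<Sum>i=1..T. gibbs_prob T s i * (s * real i - ln (gibbs_Z T s)))"
    using gibbs_prob_pos[OF T]
    by (intro sum.cong) (auto simp: plogpd_def ln_gibbs_prob[OF T] less_imp_neq[symmetric])
  then show ?thesis
    using sum_gibbs_prob[OF T, of s] sum_gibbs_prob_mean[of T s]
    by (simp add: right_diff_distrib sum_subtractf sum_distrib_left[symmetric]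
        sum_distrib_right[symmetric] algebra_simps)
qed

lemma Ltilde0_eq_gibbs:
  assumes T: "1 \<le> T" and mean: "gibbs_mean T s = \<rho>"
  shows "Ltilde0 \<rho> k T = \<rho> * ln (\<rho> * k) - ln k - \<rho> + 1 + (ln (gibbs_Z T s) - s * \<rho>)"
proof -
  have le1: "gibbs_prob T s i \<le> 1" if "i \<in> {1..T}" for i
    using that sum_gibbs_prob[OF T, of s] gibbs_prob_pos[OF T]
      member_le_sum[of i "{1..T}" "gibbs_prob T s"] by (simp add: less_imp_le)
  show ?thesis
    unfolding Ltilde0_def
  proof (rule cSup_eq_maximum[OF image_eqI[where x = "gibbs_prob T s"]], goal_cases)
    case 1
    show ?case
      using gibbs_entropy[OF T, of s] mean by simp
  next
    case 2
    show ?case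
      using le1 gibbs_prob_pos[OF T] sum_gibbs_prob[OF T] sum_gibbs_prob_mean mean
      by (auto intro: less_imp_le)
  next
    case (3 x)
    then show ?case
      using gibbs_inequality[OF T] by force
  qed
qed

section \<open>The tilt as a function of the mean\<close>

lemma has_real_derivative_gibbs_moment:
  "(gibbs_moment j T has_real_derivative gibbs_moment (Suc j) T s) (at s)"
  unfolding gibbs_moment_def gibbs_weight_def using dd_pos[THEN less_imp_neq]
  by (auto intro!: derivative_eq_intros DERIV_sum simp: algebra_simps)

lemma has_real_derivative_gibbs_mean:
  assumes T: "1 \<le> T"
  shows "(gibbs_mean T has_real_derivative
           gibbs_moment 2 T s / gibbs_Z T s - (gibbs_mean T s)\<^sup>2) (at s)"
  unfolding gibbs_mean_def[abs_def] using gibbs_Z_pos[OF T, of s]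
  by (auto intro!: derivative_eq_intros has_real_derivative_gibbs_moment
        simp: field_simps power2_eq_square numeral_2_eq_2)

lemma gibbs_variance_pos:
  assumes T: "2 \<le> T"
  shows "0 < gibbs_moment 2 T s / gibbs_Z T s - (gibbs_mean T s)\<^sup>2"
proof -
  have T1: "1 \<le> T" using T by simp
  let ?q = "gibbs_prob T s" and ?m = "gibbs_mean T s"
  have "gibbs_moment 2 T s / gibbs_Z T s - ?m\<^sup>2
      = (\<Sum>i=1..T. real i ^ 2 * ?q i) - 2 * ?m * (\<Sum>i=1..T. real i * ?q i) + ?m\<^sup>2 * (\<Sum>i=1..T. ?q i)"
    using sum_gibbs_prob[OF T1, of s] sum_gibbs_prob_mean[of T s]
    by (simp add: gibbs_prob_def gibbs_moment_def sum_divide_distrib power2_eq_square)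
  also have "\<dots> = (\<Sum>i=1..T. ?q i * (real i - ?m)\<^sup>2)"
    by (simp add: sum_subtractf sum.distrib sum_distrib_left power2_eq_square algebra_simps)
  also have "\<dots> > 0"
  proof -
    obtain j where j: "j \<in> {1..T}" "real j \<noteq> ?m"
      using T by (cases "?m = 1") (auto intro: that[of 1] that[of 2])
    show ?thesis
      using j gibbs_prob_pos[OF T1]
      by (intro sum_pos2[where i = j]) (auto simp: less_imp_le intro!: mult_nonneg_nonneg)
  qed
  finally show ?thesis .
qed

lemma strict_mono_gibbs_mean:
  assumes T: "2 \<le> T"
  shows "strict_mono (gibbs_mean T)"
proof (rule strict_monoI)
  fix a b :: real
  assume "a < b"
  then show "gibbs_mean T a < gibbs_mean T b"
  proof (rule DERIV_pos_imp_increasing)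
    fix x
    show "\<exists>y. (gibbs_mean T has_real_derivative y) (at x) \<and> 0 < y"
      using has_real_derivative_gibbs_mean[of T x] gibbs_variance_pos[OF T, of x] T by auto
  qed
qed

lemma isCont_gibbs_mean: "1 \<le> T \<Longrightarrow> isCont (gibbs_mean T) s"
  using has_real_derivative_gibbs_mean by (rule DERIV_isCont)

lemma gibbs_mean_IVT:
  assumes "1 \<le> T" "a \<le> b" "gibbs_mean T a \<le> \<rho>" "\<rho> \<le> gibbs_mean T b"
  shows "\<exists>s. a \<le> s \<and> s \<le> b \<and> gibbs_mean T s = \<rho>"
  using assms isCont_gibbs_mean by (intro IVT') (auto intro: continuous_at_imp_continuous_on)

text \<open>Outside the range of the mean, THE gives an unspecified value.\<close>
definition gibbs_tilt :: "nat \<Rightarrow> real \<Rightarrow> real" where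
  "gibbs_tilt T \<rho> = (THE s. gibbs_mean T s = \<rho>)"

lemma gibbs_tilt_eq: "2 \<le> T \<Longrightarrow> gibbs_mean T s = \<rho> \<Longrightarrow> gibbs_tilt T \<rho> = s"
  unfolding gibbs_tilt_def using strict_mono_gibbs_mean strict_mono_eq by blast

lemma gibbs_mean_tilt:
  "2 \<le> T \<Longrightarrow> \<rho> \<in> range (gibbs_mean T) \<Longrightarrow> gibbs_mean T (gibbs_tilt T \<rho>) = \<rho>"
  using gibbs_tilt_eq by force

lemma gibbs_mean_range_interval:
  assumes T: "2 \<le> T"
  shows "{gibbs_mean T (s - 1) <..< gibbs_mean T (s + 1)} \<subseteq> range (gibbs_mean T)"
proof
  fix \<rho> assume "\<rho> \<in> {gibbs_mean T (s - 1) <..< gibbs_mean T (s + 1)}"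
  then obtain s' where "gibbs_mean T s' = \<rho>"
    using gibbs_mean_IVT[of T "s - 1" "s + 1" \<rho>] T by auto
  then show "\<rho> \<in> range (gibbs_mean T)" by blast
qed

lemma open_range_gibbs_mean:
  assumes T: "2 \<le> T"
  shows "open (range (gibbs_mean T))"
proof (rule open_subopen[THEN iffD2], intro ballI)
  fix \<rho> assume "\<rho> \<in> range (gibbs_mean T)"
  then obtain s where s: "\<rho> = gibbs_mean T s" by blast
  have "\<rho> \<in> {gibbs_mean T (s - 1) <..< gibbs_mean T (s + 1)}"
    using strict_mono_gibbs_mean[OF T] unfolding s strict_mono_def by simp
  with gibbs_mean_range_interval[OF T]
  show "\<exists>U. open U \<and> \<rho> \<in> U \<and> U \<subseteq> range (gibbs_mean T)"
    by (intro exI[of _ "{gibbs_mean T (s - 1) <..< gibbs_mean T (s + 1)}"]) auto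
qed

lemma has_real_derivative_gibbs_tilt:
  assumes T: "2 \<le> T" and \<rho>: "\<rho> \<in> range (gibbs_mean T)"
  shows "(gibbs_tilt T has_real_derivative
           inverse (gibbs_moment 2 T (gibbs_tilt T \<rho>) / gibbs_Z T (gibbs_tilt T \<rho>)
                     - \<rho>\<^sup>2)) (at \<rho>)"
proof -
  have T1: "1 \<le> T" using T by simp
  obtain e where e: "0 < e" "ball \<rho> e \<subseteq> range (gibbs_mean T)"
    using open_range_gibbs_mean[OF T] \<rho> by (rule openE)
  obtain s where s: "\<rho> = gibbs_mean T s" using \<rho> by blast
  have tilt: "gibbs_tilt T \<rho> = s" using gibbs_tilt_eq[OF T] s by simp
  have cont: "isCont (gibbs_tilt T) \<rho>"
    unfolding s
    by (rule isCont_inverse_function[where d = 1]) (use T gibbs_tilt_eq isCont_gibbs_mean in auto)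
  have inv: "gibbs_mean T (gibbs_tilt T y) = y" if "\<rho> - e < y" "y < \<rho> + e" for y
    using that e(2) by (intro gibbs_mean_tilt[OF T]) (auto simp: subset_eq dist_real_def)
  have deriv: "(gibbs_mean T has_real_derivative
      gibbs_moment 2 T s / gibbs_Z T s - \<rho>\<^sup>2) (at (gibbs_tilt T \<rho>))"
    using has_real_derivative_gibbs_mean[OF T1, of s] s unfolding tilt by simp
  have "gibbs_moment 2 T s / gibbs_Z T s - \<rho>\<^sup>2 \<noteq> 0"
    using gibbs_variance_pos[OF T, of s] s by simp
  from DERIV_inverse_function[where a = "\<rho> - e" and b = "\<rho> + e", OF deriv this _ _ inv cont] show ?thesis
    using e(1) unfolding tilt by simp
qed

section \<open>Partial derivatives of Lhat0 and L0\<close>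

definition max_entropy :: "nat \<Rightarrow> real \<Rightarrow> real" where
  "max_entropy T \<rho> = ln (gibbs_Z T (gibbs_tilt T \<rho>)) - gibbs_tilt T \<rho> * \<rho>"

lemma Ltilde0_eq_max_entropy:
  assumes "2 \<le> T" "\<rho> \<in> range (gibbs_mean T)"
  shows "Ltilde0 \<rho> k T = \<rho> * ln (\<rho> * k) - ln k - \<rho> + 1 + max_entropy T \<rho>"
  using assms Ltilde0_eq_gibbs[of T "gibbs_tilt T \<rho>" \<rho> k] gibbs_mean_tilt
  by (simp add: max_entropy_def)

lemma has_real_derivative_max_entropy:
  assumes T: "2 \<le> T" and \<rho>: "\<rho> \<in> range (gibbs_mean T)"
  shows "(max_entropy T has_real_derivative - gibbs_tilt T \<rho>) (at \<rho>)"
proof -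
  define s where "s = gibbs_tilt T \<rho>"
  define s' where "s' = inverse (gibbs_moment 2 T s / gibbs_Z T s - \<rho>\<^sup>2)"
  have T1: "1 \<le> T" using T by simp
  have tilt: "(gibbs_tilt T has_real_derivative s') (at \<rho>)"
    unfolding s'_def s_def by (rule has_real_derivative_gibbs_tilt[OF T \<rho>])
  have Z: "((\<lambda>r. gibbs_Z T (gibbs_tilt T r)) has_real_derivative gibbs_moment 1 T s * s') (at \<rho>)"
    using DERIV_chain2[OF has_real_derivative_gibbs_moment tilt] unfolding s_def by simp
  have "(max_entropy T has_real_derivative
      gibbs_moment 1 T s * s' / gibbs_Z T s - (s' * \<rho> + s)) (at \<rho>)"
    unfolding max_entropy_def[abs_def] s_def using gibbs_Z_pos[OF T1]
    by (auto intro!: derivative_eq_intros Z tilt simp: s_def)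
  moreover have "gibbs_moment 1 T s / gibbs_Z T s = \<rho>"
    using gibbs_mean_tilt[OF T \<rho>] unfolding s_def gibbs_mean_def .
  txt \<open>Envelope theorem: the contributions of the tilt's derivative cancel.\<close>
  then have "gibbs_moment 1 T s * s' / gibbs_Z T s = \<rho> * s'"
    by (metis times_divide_eq_left)
  ultimately show ?thesis
    unfolding s_def by (simp add: algebra_simps)
qed

lemma has_real_derivative_Lhat0_n:
  assumes T: "2 \<le> T" and n: "0 < n" and k: "0 < k" and \<rho>: "n / k \<in> range (gibbs_mean T)"
  shows "((\<lambda>x. Lhat0 x k T) has_real_derivative (ln n - gibbs_tilt T (n / k)) / k) (at n)"
proof -
  define s where "s = gibbs_tilt T (n / k)"
  define U where "U = (\<lambda>x. x / k) -` range (gibbs_mean T)"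
  have U: "open U" "n \<in> U"
    unfolding U_def using open_range_gibbs_mean[OF T] \<rho> k
    by (auto intro!: open_vimage continuous_intros)
  have G: "((\<lambda>x. max_entropy T (x / k)) has_real_derivative - s * (1 / k)) (at n)"
    unfolding s_def using k
    by (intro DERIV_chain2[where g = "\<lambda>x. x / k", OF has_real_derivative_max_entropy[OF T \<rho>]])
      (auto intro!: derivative_eq_intros)
  have D: "((\<lambda>x. x / k * ln x - ln k - x / k + 1 + max_entropy T (x / k))
      has_real_derivative (ln n - s) / k) (at n)"
    using n k by (auto intro!: derivative_eq_intros G simp: field_simps)
  show ?thesis
    unfolding s_def[symmetric]
  proof (rule has_field_derivative_transform_within_open[OF D U])
    fix x assume "x \<in> U"
    then show "x / k * ln x - ln k - x / k + 1 + max_entropy T (x / k) = Lhat0 x k T"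
      using k unfolding U_def Lhat0_def by (simp add: Ltilde0_eq_max_entropy[OF T])
  qed
qed

lemma has_real_derivative_Lhat0_k:
  assumes T: "2 \<le> T" and n: "0 < n" and k: "0 < k" and \<rho>: "n / k \<in> range (gibbs_mean T)"
  shows "((\<lambda>x. Lhat0 n x T) has_real_derivative
           n / k\<^sup>2 * (gibbs_tilt T (n / k) - ln n + 1) - 1 / k) (at k)"
proof -
  define s where "s = gibbs_tilt T (n / k)"
  define U where "U = (\<lambda>x. n / x) -` range (gibbs_mean T) \<inter> {0<..}"
  have "continuous_on {0<..} (\<lambda>x. n / x)"
    by (intro continuous_intros) auto
  then have U: "open U" "k \<in> U"
    unfolding U_def using open_range_gibbs_mean[OF T] \<rho> k
    by (auto simp: continuous_on_open_vimage[of "{0<..}"])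
  have G: "((\<lambda>x. max_entropy T (n / x)) has_real_derivative - s * (- n / k\<^sup>2)) (at k)"
    unfolding s_def using k
    by (intro DERIV_chain2[where g = "\<lambda>x. n / x", OF has_real_derivative_max_entropy[OF T \<rho>]])
      (auto intro!: derivative_eq_intros simp: power2_eq_square)
  have D: "((\<lambda>x. n / x * ln n - ln x - n / x + 1 + max_entropy T (n / x))
      has_real_derivative n / k\<^sup>2 * (s - ln n + 1) - 1 / k) (at k)"
    using n k by (auto intro!: derivative_eq_intros G simp: field_simps power2_eq_square)
  show ?thesis
    unfolding s_def[symmetric]
  proof (rule has_field_derivative_transform_within_open[OF D U])
    fix x assume "x \<in> U"
    then show "n / x * ln n - ln x - n / x + 1 + max_entropy T (n / x) = Lhat0 n x T"
      unfolding U_def Lhat0_def by (simp add: Ltilde0_eq_max_entropy[OF T])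
  qed
qed

lemma has_real_derivative_L0_k:
  assumes T: "2 \<le> T" and n: "0 < n" and k: "0 < k" and \<rho>: "n / k \<in> range (gibbs_mean T)"
  shows "((\<lambda>x. L0 n x T) has_real_derivative
           ln (gibbs_Z T (gibbs_tilt T (n / k))) - ln k) (at k)"
proof -
  let ?s = "gibbs_tilt T (n / k)"
  have "((\<lambda>x. x * Lhat0 n x T) has_real_derivative
      1 * Lhat0 n k T + (n / k\<^sup>2 * (?s - ln n + 1) - 1 / k) * k) (at k)"
    by (intro DERIV_mult DERIV_ident has_real_derivative_Lhat0_k[OF assms])
  moreover have "Lhat0 n k T = n / k * ln n - ln k - n / k + 1 + (ln (gibbs_Z T ?s) - ?s * (n / k))"
    using k Ltilde0_eq_max_entropy[OF T \<rho>] unfolding Lhat0_def max_entropy_def by simp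
  then have "1 * Lhat0 n k T + (n / k\<^sup>2 * (?s - ln n + 1) - 1 / k) * k = ln (gibbs_Z T ?s) - ln k"
    using k by (simp add: field_simps power2_eq_square)
  ultimately show ?thesis
    unfolding L0_def by simp
qed

section \<open>Location of the tilt\<close>

lemma sum_distance_to_top_le:
  fixes q :: "nat \<Rightarrow> real"
  assumes q: "\<forall>i\<in>{1..T}. 0 \<le> q i" and \<delta>: "0 \<le> \<delta>" "\<delta> \<le> 1/2"
    and ratio: "\<forall>i. 1 \<le> i \<and> i < T \<longrightarrow> q i \<le> \<delta> * q (Suc i)"
  shows "(\<Sum>i=1..T. (real T - real i) * q i) \<le> 2 * \<delta> * (\<Sum>i=1..T. q i)"
  using q ratio
proof (induction T)
  case 0
  then show ?case by simp
next
  case (Suc T)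
  let ?S = "\<lambda>T. \<Sum>i=1..T. q i"
  have IH: "(\<Sum>i=1..T. (real T - real i) * q i) \<le> 2 * \<delta> * ?S T"
    using Suc by simp
  have "?S T \<le> (\<Sum>i=1..T. \<delta> * q (Suc i))"
    using Suc.prems(2) by (intro sum_mono) auto
  also have "\<dots> = \<delta> * (\<Sum>i=Suc 1..Suc T. q i)"
    by (simp only: sum.shift_bounds_cl_Suc_ivl sum_distrib_left)
  also have "\<dots> \<le> \<delta> * ?S (Suc T)"
    using Suc.prems(1) \<delta> by (intro mult_left_mono sum_mono2) auto
  finally have S: "?S T \<le> \<delta> * ?S (Suc T)" .
  have "(\<Sum>i=1..Suc T. (real (Suc T) - real i) * q i) = (\<Sum>i=1..T. (real T - real i) * q i + q i)"
    by (simp add: algebra_simps)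
  also have "\<dots> = (\<Sum>i=1..T. (real T - real i) * q i) + ?S T"
    by (simp add: sum.distrib)
  also have "\<dots> \<le> (1 + 2 * \<delta>) * ?S T"
    using IH by (simp add: algebra_simps)
  also have "\<dots> \<le> (1 + 2 * \<delta>) * (\<delta> * ?S (Suc T))"
    using S \<delta> by (intro mult_left_mono) auto
  also have "\<dots> \<le> 2 * \<delta> * ?S (Suc T)"
  proof -
    have "\<delta> * (2 * \<delta>) \<le> \<delta> * 1"
      using \<delta> by (intro mult_left_mono) auto
    then have "(1 + 2 * \<delta>) * \<delta> \<le> 2 * \<delta>"
      by (simp add: algebra_simps)
    moreover have "0 \<le> ?S (Suc T)"
      using Suc.prems(1) by (intro sum_nonneg) auto
    ultimately show ?thesis
      by (metis mult.assoc mult_right_mono)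
  qed
  finally show ?case .
qed

lemma sum_distance_to_top_ge:
  fixes q :: "nat \<Rightarrow> real"
  assumes q: "\<forall>i\<in>{1..T}. 0 \<le> q i" and K: "2 * K \<le> T"
    and ratio: "\<forall>i\<in>{T-K<..T}. 2 * q i \<le> q (i - K)"
  shows "real K / 2 * (\<Sum>i=1..T. q i) \<le> (\<Sum>i=1..T. (real T - real i) * q i)"
proof -
  have split: "{1..T} = {1..T-K} \<union> {T-K<..T}" "{1..T-K} \<inter> {T-K<..T} = {}"
    using K by auto
  have "2 * (\<Sum>i\<in>{T-K<..T}. q i) \<le> (\<Sum>i\<in>{T-K<..T}. q (i - K))"
    using ratio by (auto simp: sum_distrib_left intro!: sum_mono)
  also have "\<dots> = (\<Sum>i\<in>(\<lambda>i. i - K) ` {T-K<..T}. q i)"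
    using K by (subst sum.reindex) (auto simp: inj_on_def)
  also have "\<dots> \<le> (\<Sum>i=1..T-K. q i)"
    using q K by (intro sum_mono2) auto
  finally have top: "2 * (\<Sum>i\<in>{T-K<..T}. q i) \<le> (\<Sum>i=1..T-K. q i)" .
  have "(\<Sum>i=1..T. q i) \<le> 2 * (\<Sum>i=1..T-K. q i)"
    using top q split sum_nonneg[of "{T-K<..T}" q] by (simp add: sum.union_disjoint)
  then have "real K / 2 * (\<Sum>i=1..T. q i) \<le> real K * (\<Sum>i=1..T-K. q i)"
    using mult_left_mono[of _ _ "real K / 2"] by fastforce
  also have "\<dots> \<le> (\<Sum>i=1..T-K. (real T - real i) * q i)"
    using q by (simp add: sum_distrib_left) (intro sum_mono mult_right_mono; auto)
  also have "\<dots> \<le> (\<Sum>i=1..T. (real T - real i) * q i)"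
    using q by (intro sum_mono2) auto
  finally show ?thesis .
qed

lemma dd_Suc: "dd (Suc i) = 2 ^ i * real (Suc i) * dd i"
proof -
  have "real (Suc i choose 2) = real (i choose 2) + real i"
    by (simp add: numeral_2_eq_2)
  then have "2 powr real (Suc i choose 2) = 2 ^ i * 2 powr real (i choose 2)"
    by (simp add: powr_add powr_realpow)
  then show ?thesis
    unfolding dd_def by (simp add: algebra_simps)
qed

lemma dd_add_ge: "2 ^ (j * K) * dd j \<le> dd (j + K)"
proof (induction K)
  case 0
  then show ?case by simp
next
  case (Suc K)
  have "2 ^ (j * Suc K) * dd j = 2 ^ j * (2 ^ (j * K) * dd j)"
    by (simp add: power_add mult_ac)
  also have "\<dots> \<le> (2 ^ (j + K) * real (Suc (j + K))) * dd (j + K)"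
  proof (rule mult_mono)
    have "(2::real) ^ j \<le> 2 ^ (j + K)"
      by (intro power_increasing) auto
    also have "\<dots> \<le> 2 ^ (j + K) * real (Suc (j + K))"
      by simp
    finally show "(2::real) ^ j \<le> 2 ^ (j + K) * real (Suc (j + K))" .
  qed (use Suc.IH dd_pos[of j] in auto)
  also have "\<dots> = dd (j + Suc K)"
    by (simp add: dd_Suc)
  finally show ?case .
qed

lemma gibbs_mean_gap:
  assumes "1 \<le> T"
  shows "(real T - gibbs_mean T s) * gibbs_Z T s = (\<Sum>i=1..T. (real T - real i) * gibbs_weight s i)"
proof -
  have "(real T - gibbs_mean T s) * gibbs_Z T s = real T * gibbs_Z T s - gibbs_moment 1 T s"
    using gibbs_Z_pos[OF assms, of s] by (simp add: gibbs_mean_def left_diff_distrib)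
  then show ?thesis
    by (simp add: gibbs_moment_def sum_distrib_left left_diff_distrib sum_subtractf)
qed

lemma gibbs_mean_le:
  assumes K: "1 \<le> K" and T: "2 * K \<le> T"
  shows "gibbs_mean T ((real T - 2 * real K) * ln 2) \<le> real T - real K / 2"
proof -
  define s where "s = (real T - 2 * real K) * ln 2"
  have T1: "1 \<le> T" using K T by simp
  have "2 * gibbs_weight s i \<le> gibbs_weight s (i - K)" if i: "i \<in> {T-K<..T}" for i
  proof -
    define j where "j = i - K"
    have ij: "i = j + K" and j: "T - 2 * K + 1 \<le> j"
      using i T unfolding j_def by auto
    have m: "real ((T - 2 * K) * K) = (real T - 2 * real K) * real K"
      using T by (simp add: of_nat_diff)
    have "2 * exp (s * real K) = 2 * exp (real ((T - 2 * K) * K) * ln 2)"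
      unfolding s_def m by (simp add: mult_ac)
    also have "\<dots> = 2 ^ Suc ((T - 2 * K) * K)"
      by (simp add: exp_of_nat_mult del: of_nat_mult)
    also have "\<dots> \<le> (2::real) ^ (j * K)"
      using K j by (intro power_increasing) (auto intro: order_trans[OF _ mult_le_mono1[OF j]])
    finally have "2 * exp (s * real K) * dd j \<le> dd i"
      using dd_add_ge[of j K] dd_pos[of j] unfolding ij
      by (meson mult_right_mono order_trans less_imp_le)
    then have "exp (s * real j) * (2 * exp (s * real K) * dd j) \<le> exp (s * real j) * dd i"
      by simp
    then show ?thesis
      using dd_pos[of i] dd_pos[of j]
      by (simp add: gibbs_weight_def ij distrib_left exp_add field_simps)
  qed
  then have "real K / 2 * gibbs_Z T s \<le> (real T - gibbs_mean T s) * gibbs_Z T s"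
    using sum_distance_to_top_ge[of T "gibbs_weight s" K] T gibbs_weight_pos gibbs_mean_gap[OF T1, of s]
    by (simp add: gibbs_moment_def less_imp_le)
  then show ?thesis
    using gibbs_Z_pos[OF T1, of s] unfolding s_def by simp
qed

lemma gibbs_mean_ge:
  assumes T: "1 \<le> T" and \<delta>: "0 < \<delta>" "\<delta> \<le> 1/2"
  shows "real T - 2 * \<delta> \<le> gibbs_mean T ((real T - 1) * ln 2 + ln (real T) - ln \<delta>)"
proof -
  define s where "s = (real T - 1) * ln 2 + ln (real T) - ln \<delta>"
  have "exp ((real T - 1) * ln 2) = 2 ^ (T - 1)"
    using T exp_of_nat_mult[of "T - 1" "ln 2 :: real"] by (simp add: of_nat_diff)
  then have es: "\<delta> * exp s = 2 ^ (T - 1) * real T"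
    using T \<delta> by (simp add: s_def exp_diff exp_add)
  have "gibbs_weight s i \<le> \<delta> * gibbs_weight s (Suc i)" if i: "1 \<le> i" "i < T" for i
  proof -
    have "(2::real) ^ i * real (Suc i) \<le> \<delta> * exp s"
      unfolding es using i by (intro mult_mono power_increasing) auto
    then have "gibbs_weight s i * 1 \<le> gibbs_weight s i * (\<delta> * exp s / (2 ^ i * real (Suc i)))"
      using gibbs_weight_pos[of s i] by (intro mult_left_mono) (auto simp: le_divide_eq_1_pos)
    also have "\<dots> = \<delta> * gibbs_weight s (Suc i)"
      by (simp add: gibbs_weight_def dd_Suc distrib_left exp_add algebra_simps)
    finally show ?thesis by simp
  qed
  then have "(real T - gibbs_mean T s) * gibbs_Z T s \<le> 2 * \<delta> * gibbs_Z T s"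
    using sum_distance_to_top_le[of T "gibbs_weight s" \<delta>] \<delta> gibbs_weight_pos gibbs_mean_gap[OF T, of s]
    by (simp add: gibbs_moment_def less_imp_le)
  then show ?thesis
    using gibbs_Z_pos[OF T, of s] unfolding s_def by simp
qed

lemma gibbs_tilt_bounds:
  assumes K: "1 \<le> K" "2 * K \<le> T" and \<delta>: "0 < \<delta>" "\<delta> \<le> 1/2"
    and \<rho>: "real T - real K / 2 < \<rho>" "\<rho> < real T - 2 * \<delta>"
  shows "\<rho> \<in> range (gibbs_mean T)"
    and "(real T - 2 * real K) * ln 2 \<le> gibbs_tilt T \<rho>"
    and "gibbs_tilt T \<rho> \<le> (real T - 1) * ln 2 + ln (real T) - ln \<delta>"
proof -
  define a where "a = (real T - 2 * real K) * ln 2"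
  define b where "b = (real T - 1) * ln 2 + ln (real T) - ln \<delta>"
  have T: "2 \<le> T" using K by simp
  have ma: "gibbs_mean T a < \<rho>"
    using gibbs_mean_le[OF K] \<rho>(1) unfolding a_def by linarith
  have mb: "\<rho> < gibbs_mean T b"
    using gibbs_mean_ge[OF _ \<delta>, of T] T \<rho>(2) unfolding b_def by linarith
  have "a \<le> b"
  proof (rule ccontr)
    assume "\<not> a \<le> b"
    then have "gibbs_mean T b < gibbs_mean T a"
      using strict_mono_gibbs_mean[OF T] by (simp add: strict_mono_def)
    then show False
      using ma mb by simp
  qed
  then obtain s where s: "a \<le> s" "s \<le> b" "gibbs_mean T s = \<rho>"
    using gibbs_mean_IVT[of T a b \<rho>] ma mb T by auto
  show "\<rho> \<in> range (gibbs_mean T)"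
    using s(3) by blast
  show "(real T - 2 * real K) * ln 2 \<le> gibbs_tilt T \<rho>"
    and "gibbs_tilt T \<rho> \<le> (real T - 1) * ln 2 + ln (real T) - ln \<delta>"
    using s(1,2) unfolding gibbs_tilt_eq[OF T s(3)] a_def b_def .
qed

lemma real_choose_two: "real (n choose 2) = real n * (real n - 1) / 2"
  by (induction n) (simp_all add: numeral_2_eq_2 field_simps)

lemma ln_gibbs_Z_ge:
  assumes T: "1 \<le> T"
  shows "s * real T - real T * (real T - 1) / 2 * ln 2 - real T * ln (real T) \<le> ln (gibbs_Z T s)"
proof -
  have "ln (fact T :: real) \<le> ln (real T ^ T)"
    using fact_le_power[of T, where 'a = real] T by (subst ln_le_cancel_iff) auto
  then have "ln (dd T) \<le> real T * (real T - 1) / 2 * ln 2 + real T * ln (real T)"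
    using T by (simp add: dd_def ln_mult powr_def real_choose_two ln_realpow)
  moreover have "gibbs_weight s T \<le> gibbs_Z T s"
    unfolding gibbs_moment_def power_0 mult_1_left using T gibbs_weight_pos
    by (intro member_le_sum) (auto intro: less_imp_le)
  then have "ln (gibbs_weight s T) \<le> ln (gibbs_Z T s)"
    using gibbs_weight_pos gibbs_Z_pos[OF T, of s] by (subst ln_le_cancel_iff) auto
  ultimately show ?thesis
    using dd_pos[of T] by (simp add: gibbs_weight_def ln_div)
qed

lemma ln_gibbs_Z_le:
  assumes T: "1 \<le> T"
  shows "ln (gibbs_Z T s) \<le> ln (real T) + (s + ln 2 / 2)\<^sup>2 / (2 * ln 2)"
proof -
  define M where "M = (s + ln 2 / 2)\<^sup>2 / (2 * ln 2)"
  have "gibbs_weight s i \<le> exp M" for i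
  proof -
    have "2 powr real (i choose 2) \<le> dd i"
      unfolding dd_def by simp
    then have "gibbs_weight s i \<le> exp (s * real i) / 2 powr real (i choose 2)"
      unfolding gibbs_weight_def using dd_pos[of i] by (intro divide_left_mono) auto
    also have "\<dots> = exp (s * real i - real (i choose 2) * ln 2)"
      by (simp add: powr_def exp_diff)
    also have "\<dots> \<le> exp M"
    proof -
      have "M - (s * real i - real (i choose 2) * ln 2) = (s + ln 2 / 2 - ln 2 * real i)\<^sup>2 / (2 * ln 2)"
        unfolding M_def real_choose_two by (simp add: field_simps power2_eq_square)
      moreover have "0 \<le> (s + ln 2 / 2 - ln 2 * real i)\<^sup>2 / (2 * ln 2)"
        by simp
      ultimately have "s * real i - real (i choose 2) * ln 2 \<le> M"
        by linarith
      then show ?thesis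
        by simp
    qed
    finally show ?thesis .
  qed
  then have "gibbs_Z T s \<le> real T * exp M"
    unfolding gibbs_moment_def using sum_mono[of "{1..T}" "gibbs_weight s" "\<lambda>_. exp M"] by simp
  then have "ln (gibbs_Z T s) \<le> ln (real T * exp M)"
    using gibbs_Z_pos[OF T, of s] by (subst ln_le_cancel_iff) auto
  then show ?thesis
    using T by (simp add: ln_mult M_def)
qed

section \<open>Asymptotics in the regime t = alpha0 n + O(1)\<close>

lemma mult_ln2_bounds:
  fixes x :: real
  assumes "0 \<le> x"
  shows "x * ln 2 \<le> x" "x \<le> 3 / 2 * (x * ln 2)"
proof -
  show "x * ln 2 \<le> x"
    using assms ln_2_less_1 by (simp add: mult_left_le)
  have "x * (2 / 3) \<le> x * ln 2"
    using assms ln2_ge_two_thirds by (intro mult_left_mono) auto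
  then show "x \<le> 3 / 2 * (x * ln 2)"
    by simp
qed

lemma ln_le_ln_double:
  fixes x b :: real
  assumes "0 < x" "x * ln 2 \<le> b"
  shows "ln x \<le> ln (2 * b)"
proof -
  have "x \<le> 2 * b"
    using assms mult_ln2_bounds[of x] by linarith
  then show ?thesis
    using assms(1) by (intro ln_mono)
qed

lemma ln_gibbs_Z_ge_scaled:
  assumes T: "1 \<le> T" and \<tau>: "0 \<le> a" "a \<le> real T * ln 2" "real T * ln 2 \<le> b"
    and s: "real T * ln 2 - 2 * real K \<le> s"
  shows "a\<^sup>2 / 2 - 2 * real K * b - b * ln (2 * b) \<le> ln 2 * ln (gibbs_Z T s)"
proof -
  define \<tau> where "\<tau> = real T * ln 2"
  have lnT: "0 \<le> ln (real T)" "ln (real T) \<le> ln (2 * b)"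
    using T \<tau> ln_le_ln_double[of "real T" b] by auto
  have "\<tau> * \<tau> - 2 * real K * \<tau> \<le> s * \<tau>"
    using mult_right_mono[OF s, of \<tau>] \<tau> unfolding \<tau>_def by (simp add: algebra_simps)
  moreover have "\<tau> * ln (real T) \<le> \<tau> * ln (2 * b)" "0 \<le> \<tau> * ln 2"
    using lnT \<tau> unfolding \<tau>_def by (auto intro: mult_left_mono)
  ultimately have "\<tau> * \<tau> / 2 - 2 * real K * \<tau> - \<tau> * ln (2 * b)
      \<le> s * \<tau> - (\<tau> * \<tau> - \<tau> * ln 2) / 2 - \<tau> * ln (real T)"
    by (simp add: field_simps)
  also have "\<dots> = ln 2 * (s * real T - real T * (real T - 1) / 2 * ln 2 - real T * ln (real T))"
    unfolding \<tau>_def by (simp add: algebra_simps)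
  also have "\<dots> \<le> ln 2 * ln (gibbs_Z T s)"
    using ln_gibbs_Z_ge[OF T, of s] by (intro mult_left_mono) auto
  finally have "\<tau> * \<tau> / 2 - 2 * real K * \<tau> - \<tau> * ln (2 * b) \<le> ln 2 * ln (gibbs_Z T s)" .
  moreover have "a * a \<le> \<tau> * \<tau>" "2 * real K * \<tau> \<le> 2 * real K * b" "\<tau> * ln (2 * b) \<le> b * ln (2 * b)"
    using \<tau> lnT unfolding \<tau>_def by (auto intro: mult_mono mult_left_mono mult_right_mono)
  ultimately show ?thesis
    unfolding power2_eq_square by linarith
qed

lemma ln_gibbs_Z_le_scaled:
  assumes T: "1 \<le> T" and \<tau>: "real T * ln 2 \<le> b"
    and s: "0 \<le> s" "s \<le> (real T - 1) * ln 2 + ln (real T) - A"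
  shows "ln 2 * ln (gibbs_Z T s) \<le> ln (2 * b) + (b + ln (2 * b) - A)\<^sup>2 / 2"
proof -
  have lnT: "0 \<le> ln (real T)" "ln (real T) \<le> ln (2 * b)"
    using T \<tau> ln_le_ln_double[of "real T" b] by auto
  have "ln 2 * ln (gibbs_Z T s) \<le> ln 2 * (ln (real T) + (s + ln 2 / 2)\<^sup>2 / (2 * ln 2))"
    using ln_gibbs_Z_le[OF T, of s] by (intro mult_left_mono) auto
  also have "\<dots> = ln 2 * ln (real T) + (s + ln 2 / 2)\<^sup>2 / 2"
    by (simp add: field_simps)
  also have "\<dots> \<le> ln (2 * b) + (b + ln (2 * b) - A)\<^sup>2 / 2"
  proof -
    have "ln 2 * ln (real T) \<le> ln (2 * b)"
      using mult_ln2_bounds(1)[of "ln (real T)"] lnT by (simp add: mult.commute)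
    moreover have "(real T - 1) * ln 2 = real T * ln 2 - ln 2" "0 < ln (2::real)"
      by (simp_all add: algebra_simps)
    then have "s + ln 2 / 2 \<le> b + ln (2 * b) - A"
      using s(2) \<tau> lnT by linarith
    then have "(s + ln 2 / 2)\<^sup>2 \<le> (b + ln (2 * b) - A)\<^sup>2"
      using s(1) by (intro power_mono) auto
    ultimately show ?thesis
      by linarith
  qed
  finally show ?thesis .
qed

lemma eventually_tilt_scale:
  fixes A B c :: real and K :: nat
  shows "\<forall>\<^sub>F L in at_top. \<forall>T :: real. \<bar>T * ln 2 - (2 * L - 2 * ln L)\<bar> \<le> B \<longrightarrow>
     2 * real K + 2 \<le> T \<and>
     (\<forall>\<rho>. T - c \<le> \<rho> \<and> \<rho> \<le> T \<longrightarrow> L \<le> \<rho> \<and> \<rho> \<le> 6 * L) \<and>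
     (\<forall>s. (T - 2 * real K) * ln 2 \<le> s \<and> s \<le> (T - 1) * ln 2 + ln T - A \<longrightarrow>
        L / 2 \<le> s - L + 1 \<and> s - L + 1 \<le> 2 * L)"
proof -
  define tm tp where "tm L = 2 * L - 2 * ln L - B" and "tp L = 2 * L - 2 * ln L + B" for L :: real
  have "\<forall>\<^sub>F L in at_top. 2 * real K + 2 \<le> tm L \<and> L + c \<le> tm L \<and> tp L \<le> 4 * L \<and>
      L / 2 \<le> tm L - 2 * real K - L + 1 \<and> tp L + ln (2 * tp L) - A - L + 1 \<le> 2 * L"
    unfolding tm_def tp_def by (intro eventually_conj; real_asymp)
  then show ?thesis
  proof (rule eventually_mono, intro allI impI, elim conjE)
    fix L T :: real
    assume asymp: "2 * real K + 2 \<le> tm L" "L + c \<le> tm L" "tp L \<le> 4 * L"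
      "L / 2 \<le> tm L - 2 * real K - L + 1" "tp L + ln (2 * tp L) - A - L + 1 \<le> 2 * L"
      and "\<bar>T * ln 2 - (2 * L - 2 * ln L)\<bar> \<le> B"
    then have \<tau>: "tm L \<le> T * ln 2" "T * ln 2 \<le> tp L"
      unfolding tm_def tp_def by auto
    then have "0 < T * ln 2"
      using asymp(1) of_nat_0_le_iff[of K] by linarith
    then have T0: "0 < T"
      by (simp add: zero_less_mult_iff)
    note T = mult_ln2_bounds[OF less_imp_le[OF T0]]
    have "2 * real K + 2 \<le> T"
      using asymp(1) T \<tau> by linarith
    moreover have "L \<le> \<rho> \<and> \<rho> \<le> 6 * L" if "T - c \<le> \<rho>" "\<rho> \<le> T" for \<rho>
      using that asymp T \<tau> by linarith
    moreover have "L / 2 \<le> s - L + 1 \<and> s - L + 1 \<le> 2 * L"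
      if s: "(T - 2 * real K) * ln 2 \<le> s" "s \<le> (T - 1) * ln 2 + ln T - A" for s
    proof
      have "real K * ln 2 \<le> real K"
        using mult_ln2_bounds(1)[of "real K"] by simp
      then show "L / 2 \<le> s - L + 1"
        using s(1) asymp(4) \<tau> by (simp add: algebra_simps)
      have "(T - 1) * ln 2 \<le> T * ln 2"
        by (simp add: algebra_simps)
      then show "s - L + 1 \<le> 2 * L"
        using s(2) \<tau> asymp(5) ln_le_ln_double[OF T0 \<tau>(2)] by linarith
    qed
    ultimately show "2 * real K + 2 \<le> T \<and>
      (\<forall>\<rho>. T - c \<le> \<rho> \<and> \<rho> \<le> T \<longrightarrow> L \<le> \<rho> \<and> \<rho> \<le> 6 * L) \<and>
      (\<forall>s. (T - 2 * real K) * ln 2 \<le> s \<and> s \<le> (T - 1) * ln 2 + ln T - A \<longrightarrow>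
         L / 2 \<le> s - L + 1 \<and> s - L + 1 \<le> 2 * L)"
      by blast
  qed
qed

lemma eventually_ln_gibbs_Z_estimate:
  fixes A B :: real and K :: nat
  shows "\<forall>\<^sub>F L in at_top. \<forall>(T::nat) s \<rho>.
     \<bar>real T * ln 2 - (2 * L - 2 * ln L)\<bar> \<le> B \<and>
     (real T - 2 * real K) * ln 2 \<le> s \<and> s \<le> (real T - 1) * ln 2 + ln (real T) - A \<and>
     1 \<le> \<rho> \<and> \<rho> \<le> 6 * L \<longrightarrow>
       \<bar>ln 2 * (ln (gibbs_Z T s) - L + ln \<rho>) - 2 * L\<^sup>2\<bar> \<le> 10 * L * ln L"
proof -
  define tm tp where "tm L = 2 * L - 2 * ln L - B" and "tp L = 2 * L - 2 * ln L + B" for L :: real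
  have "\<forall>\<^sub>F L in at_top. 2 * real K + 1 \<le> tm L \<and>
      - 10 * L * ln L \<le> (tm L)\<^sup>2 / 2 - 2 * real K * tp L - tp L * ln (2 * tp L) - L - 2 * L\<^sup>2 \<and>
      ln (2 * tp L) + (tp L + ln (2 * tp L) - A)\<^sup>2 / 2 + ln (6 * L) - 2 * L\<^sup>2 \<le> 10 * L * ln L"
    unfolding tm_def tp_def by (intro eventually_conj; real_asymp)
  then show ?thesis
  proof (rule eventually_mono, intro allI impI, elim conjE)
    fix L s \<rho> :: real and T :: nat
    assume asymp: "2 * real K + 1 \<le> tm L"
      "- 10 * L * ln L \<le> (tm L)\<^sup>2 / 2 - 2 * real K * tp L - tp L * ln (2 * tp L) - L - 2 * L\<^sup>2"
      "ln (2 * tp L) + (tp L + ln (2 * tp L) - A)\<^sup>2 / 2 + ln (6 * L) - 2 * L\<^sup>2 \<le> 10 * L * ln L"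
      and "\<bar>real T * ln 2 - (2 * L - 2 * ln L)\<bar> \<le> B"
      and s: "(real T - 2 * real K) * ln 2 \<le> s" "s \<le> (real T - 1) * ln 2 + ln (real T) - A"
      and \<rho>: "1 \<le> \<rho>" "\<rho> \<le> 6 * L"
    then have \<tau>: "tm L \<le> real T * ln 2" "real T * ln 2 \<le> tp L"
      unfolding tm_def tp_def by auto
    then have T: "1 \<le> T"
      using asymp(1) by (cases T) auto
    have "real K * ln 2 \<le> real K"
      using mult_ln2_bounds(1)[of "real K"] by simp
    then have s_lo: "real T * ln 2 - 2 * real K \<le> s"
      using s(1) by (simp add: algebra_simps)
    have "(tm L)\<^sup>2 / 2 - 2 * real K * tp L - tp L * ln (2 * tp L) \<le> ln 2 * ln (gibbs_Z T s)"
      using asymp(1) \<tau> s_lo by (intro ln_gibbs_Z_ge_scaled[OF T]) auto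
    moreover have "ln 2 * ln (gibbs_Z T s) \<le> ln (2 * tp L) + (tp L + ln (2 * tp L) - A)\<^sup>2 / 2"
      using asymp(1) \<tau> s_lo s(2) by (intro ln_gibbs_Z_le_scaled[OF T]) auto
    moreover have "0 \<le> ln 2 * ln \<rho>" "ln 2 * ln \<rho> \<le> ln (6 * L)" "0 \<le> ln 2 * L" "ln 2 * L \<le> L"
      using \<rho> mult_ln2_bounds(1)[of "ln \<rho>"] mult_ln2_bounds(1)[of L] asymp(1) \<tau>
      by (auto simp: mult.commute intro: order_trans[OF _ ln_mono])
    ultimately show "\<bar>ln 2 * (ln (gibbs_Z T s) - L + ln \<rho>) - 2 * L\<^sup>2\<bar> \<le> 10 * L * ln L"
      using asymp(2,3) by (simp add: algebra_simps abs_le_iff)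
  qed
qed

definition derivative_bounds :: "real \<Rightarrow> real \<Rightarrow> nat \<Rightarrow> bool" where
  "derivative_bounds n k T \<longleftrightarrow>
     (\<exists>D. ((\<lambda>x. Lhat0 n x T) has_real_derivative D) (at k) \<and>
        1/4 * ln n ^ 3 / n \<le> D \<and> D \<le> 72 * ln n ^ 3 / n) \<and>
     (\<exists>D. ((\<lambda>x. Lhat0 x k T) has_real_derivative D) (at n) \<and>
        - 12 * (ln n)\<^sup>2 / n \<le> D \<and> D \<le> - (1/4) * (ln n)\<^sup>2 / n) \<and>
     (\<exists>D. ((\<lambda>x. L0 n x T) has_real_derivative D) (at k) \<and>
        \<bar>D - 2 / ln 2 * (ln n)\<^sup>2\<bar> \<le> 10 / ln 2 * ln n * ln (ln n))"

lemma scale_polynomial_bounds: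
  fixes L \<rho> w :: real
  assumes L: "5 \<le> L" and \<rho>: "L \<le> \<rho>" "\<rho> \<le> 6 * L" and w: "L / 2 \<le> w" "w \<le> 2 * L"
  shows "1/4 * L ^ 3 \<le> \<rho>\<^sup>2 * w - \<rho>" "\<rho>\<^sup>2 * w - \<rho> \<le> 72 * L ^ 3"
    and "1/4 * L\<^sup>2 \<le> \<rho> * (w - 1)" "\<rho> * (w - 1) \<le> 12 * L\<^sup>2"
proof -
  have "L\<^sup>2 * (L / 2) \<le> \<rho>\<^sup>2 * w" "\<rho>\<^sup>2 * w \<le> (6 * L)\<^sup>2 * (2 * L)"
    using assms by (intro mult_mono power_mono; simp)+
  then have "L ^ 3 / 2 \<le> \<rho>\<^sup>2 * w" "\<rho>\<^sup>2 * w \<le> 72 * L ^ 3"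
    by (simp_all add: power2_eq_square power3_eq_cube)
  moreover have "L * 24 \<le> L * (L * L)"
    using L mult_mono[OF L L] by (intro mult_left_mono) auto
  then have "\<rho> \<le> L ^ 3 / 4"
    using \<rho> by (simp add: power3_eq_cube)
  ultimately show "1/4 * L ^ 3 \<le> \<rho>\<^sup>2 * w - \<rho>" "\<rho>\<^sup>2 * w - \<rho> \<le> 72 * L ^ 3"
    using \<rho> L by linarith+
  have "L * (L / 4) \<le> \<rho> * (w - 1)" "\<rho> * (w - 1) \<le> (6 * L) * (2 * L)"
    using assms by (intro mult_mono; simp)+
  then show "1/4 * L\<^sup>2 \<le> \<rho> * (w - 1)" "\<rho> * (w - 1) \<le> 12 * L\<^sup>2"
    by (simp_all add: power2_eq_square)
qed

lemma derivative_boundsI: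
  fixes n k :: real and T :: nat
  defines "L \<equiv> ln n" and "s \<equiv> gibbs_tilt T (n / k)"
  assumes T: "2 \<le> T" and n: "0 < n" and k: "0 < k" and \<rho>: "n / k \<in> range (gibbs_mean T)"
    and L: "5 \<le> L" and scale: "L \<le> n / k" "n / k \<le> 6 * L" "L / 2 \<le> s - L + 1" "s - L + 1 \<le> 2 * L"
    and Z: "\<bar>ln 2 * (ln (gibbs_Z T s) - ln k) - 2 * L\<^sup>2\<bar> \<le> 10 * L * ln L"
  shows "derivative_bounds n k T"
  unfolding derivative_bounds_def L_def[symmetric]
proof (intro conjI exI)
  define \<rho> w where "\<rho> = n / k" and "w = s - L + 1"
  have \<rho>w: "L \<le> \<rho>" "\<rho> \<le> 6 * L" "L / 2 \<le> w" "w \<le> 2 * L"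
    using scale unfolding \<rho>_def w_def by auto
  show "((\<lambda>x. Lhat0 n x T) has_real_derivative n / k\<^sup>2 * (s - ln n + 1) - 1 / k) (at k)"
    unfolding s_def by (rule has_real_derivative_Lhat0_k[OF T n k \<rho>])
  note bounds = scale_polynomial_bounds[OF L \<rho>w]
  have "n / k\<^sup>2 * (s - ln n + 1) - 1 / k = (\<rho>\<^sup>2 * w - \<rho>) / n"
    using n k unfolding \<rho>_def w_def L_def by (simp add: field_simps power2_eq_square)
  then show "1/4 * L ^ 3 / n \<le> n / k\<^sup>2 * (s - ln n + 1) - 1 / k"
    and "n / k\<^sup>2 * (s - ln n + 1) - 1 / k \<le> 72 * L ^ 3 / n"
    using bounds(1,2) n by (simp_all add: divide_right_mono del: times_divide_eq_left)
  show "((\<lambda>x. Lhat0 x k T) has_real_derivative (ln n - s) / k) (at n)"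
    unfolding s_def by (rule has_real_derivative_Lhat0_n[OF T n k \<rho>])
  have "(ln n - s) / k = - (\<rho> * (w - 1)) / n"
    using n k unfolding \<rho>_def w_def L_def by (simp add: field_simps)
  then show "- 12 * L\<^sup>2 / n \<le> (ln n - s) / k" and "(ln n - s) / k \<le> - (1/4) * L\<^sup>2 / n"
    using bounds(3,4) n by (simp_all add: divide_right_mono del: times_divide_eq_left)
  show "((\<lambda>x. L0 n x T) has_real_derivative ln (gibbs_Z T s) - ln k) (at k)"
    unfolding s_def by (rule has_real_derivative_L0_k[OF T n k \<rho>])
  have "ln 2 * (ln (gibbs_Z T s) - ln k - 2 / ln 2 * L\<^sup>2) = ln 2 * (ln (gibbs_Z T s) - ln k) - 2 * L\<^sup>2"
    by (simp add: algebra_simps)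
  then have "\<bar>ln 2 * (ln (gibbs_Z T s) - ln k - 2 / ln 2 * L\<^sup>2)\<bar> \<le> 10 * L * ln L"
    using Z by simp
  then have "ln 2 * \<bar>ln (gibbs_Z T s) - ln k - 2 / ln 2 * L\<^sup>2\<bar> \<le> 10 * L * ln L"
    by (simp add: abs_mult)
  then show "\<bar>ln (gibbs_Z T s) - ln k - 2 / ln 2 * L\<^sup>2\<bar> \<le> 10 / ln 2 * L * ln L"
    by (simp add: field_simps)
qed

lemma alpha0_close_imp_ln2_close:
  assumes "\<bar>T - alpha0 x\<bar> \<le> B" "0 < ln x"
  shows "\<bar>T * ln 2 - (2 * ln x - 2 * ln (ln x))\<bar> \<le> \<bar>B\<bar> + \<bar>2 * ln (ln 2) + 2 - ln 2\<bar>"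
proof -
  have "T * ln 2 - (2 * ln x - 2 * ln (ln x)) = (T - alpha0 x) * ln 2 + (2 * ln (ln 2) + 2 - ln 2)"
    using assms(2) by (simp add: alpha0_def log_def ln_div field_simps)
  moreover have "\<bar>(T - alpha0 x) * ln 2\<bar> \<le> \<bar>B\<bar>"
    using assms(1) mult_ln2_bounds(1)[of "\<bar>T - alpha0 x\<bar>"] by (simp add: abs_mult)
  ultimately show ?thesis
    by (smt (verit) abs_triangle_ineq)
qed

lemma eventually_derivative_bounds:
  assumes c: "0 < c1" "c1 \<le> c2"
  shows "\<forall>\<^sub>F n in sequentially. \<forall>T k. \<bar>real T - alpha0 (real n)\<bar> \<le> B \<and> 0 < k \<and>
     c1 \<le> real T - real n / k \<and> real T - real n / k \<le> c2 \<longrightarrow> derivative_bounds (real n) k T"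
proof -
  txt \<open>Choose K and \<delta> so that \<rho> = t - Theta(1) lies strictly between the mean bounds of
    gibbs_mean_le and gibbs_mean_ge.\<close>
  define K :: nat where "K = nat \<lceil>2 * c2\<rceil> + 1"
  define \<delta> where "\<delta> = min (1/2) (c1 / 4)"
  define B' where "B' = \<bar>B\<bar> + \<bar>2 * ln (ln 2) + 2 - ln 2\<bar>"
  have "2 * c2 \<le> real (nat \<lceil>2 * c2\<rceil>)"
    using c by linarith
  then have K: "1 \<le> K" "c2 < real K / 2"
    unfolding K_def by auto
  have \<delta>: "0 < \<delta>" "\<delta> \<le> 1/2" "2 * \<delta> < c1"
    unfolding \<delta>_def using c by auto
  note ev = eventually_compose_filterlim[OF
      eventually_conj[OF eventually_tilt_scale[where A = "ln \<delta>" and B = B' and c = c2 and K = K]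
        eventually_conj[OF eventually_ln_gibbs_Z_estimate[where A = "ln \<delta>" and B = B' and K = K]
          eventually_ge_at_top[of "5::real"]]]
      filterlim_compose[OF ln_at_top filterlim_real_sequentially]]
  show ?thesis
  proof (rule eventually_mono[OF ev], intro allI impI, elim conjE, goal_cases)
    case (1 n T k)
    note scale = 1(1) and hT = 1(2) and Z = 1(3) and L = 1(4) and k = 1(5) and \<rho> = 1(6,7)
    have n: "0 < real n"
      using L by (cases n) auto
    have "\<bar>real T * ln 2 - (2 * ln (real n) - 2 * ln (ln (real n)))\<bar> \<le> B'"
      unfolding B'_def using alpha0_close_imp_ln2_close[OF hT] L by simp
    note Z = Z[rule_format, OF conjI[OF this]] and sc = scale[rule_format, OF this]
    note sc = sc[THEN conjunct1] sc[THEN conjunct2, THEN conjunct1] sc[THEN conjunct2, THEN conjunct2]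
    have T: "2 * K \<le> T" "2 \<le> T"
      using sc(1) by linarith+
    define \<rho> where "\<rho> = real n / k"
    have "real T - real K / 2 < \<rho>" "\<rho> < real T - 2 * \<delta>"
      using \<rho> K \<delta> unfolding \<rho>_def by linarith+
    note tilt = gibbs_tilt_bounds[OF K(1) T(1) \<delta>(1,2) this]
    have \<rho>_scale: "ln (real n) \<le> \<rho>" "\<rho> \<le> 6 * ln (real n)"
      using sc(2) \<rho> c unfolding \<rho>_def by auto
    have s_scale: "ln (real n) / 2 \<le> gibbs_tilt T \<rho> - ln (real n) + 1"
        "gibbs_tilt T \<rho> - ln (real n) + 1 \<le> 2 * ln (real n)"
      using sc(3) tilt(2,3) by auto
    have "1 \<le> \<rho>"
      using \<rho>_scale L by linarith
    then have "\<bar>ln 2 * (ln (gibbs_Z T (gibbs_tilt T \<rho>)) - ln (real n) + ln \<rho>) - 2 * (ln (real n))\<^sup>2\<bar>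
        \<le> 10 * ln (real n) * ln (ln (real n))"
      using Z tilt(2,3) \<rho>_scale by blast
    moreover have "ln \<rho> = ln (real n) - ln k"
      using n k unfolding \<rho>_def by (simp add: ln_div)
    ultimately have "\<bar>ln 2 * (ln (gibbs_Z T (gibbs_tilt T \<rho>)) - ln k) - 2 * (ln (real n))\<^sup>2\<bar>
        \<le> 10 * ln (real n) * ln (ln (real n))"
      by simp
    then show ?case
      using derivative_boundsI[OF T(2) n k tilt(1)[unfolded \<rho>_def] L]
        \<rho>_scale s_scale unfolding \<rho>_def by blast
  qed
qed

theorem corollary40:
  fixes t :: "nat \<Rightarrow> nat"
  assumes t_close: "\<exists>B. \<forall>\<^sub>F n in sequentially. \<bar>real (t n) - alpha0 (real n)\<bar> \<le> B"
  assumes c: "0 < c1" "c1 \<le> c2"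
  shows "\<exists>a1 a2 b1 b2 C (N::nat). 0 < a1 \<and> 0 < a2 \<and> 0 < b1 \<and> 0 < b2 \<and>
     (\<forall>n\<ge>N. \<forall>k::real. 0 < k \<and> k \<le> real n / 2 \<and>
         c1 \<le> real (t n) - real n / k \<and> real (t n) - real n / k \<le> c2 \<longrightarrow>
       (\<exists>D. ((\<lambda>x. Lhat0 (real n) x (t n)) has_real_derivative D) (at k) \<and>
            a1 * ln (real n) ^ 3 / real n \<le> D \<and> D \<le> a2 * ln (real n) ^ 3 / real n) \<and>
       (\<exists>D. ((\<lambda>x. Lhat0 x k (t n)) has_real_derivative D) (at (real n)) \<and>
            - b2 * ln (real n) ^ 2 / real n \<le> D \<and> D \<le> - b1 * ln (real n) ^ 2 / real n) \<and>
       (\<exists>D. ((\<lambda>x. L0 (real n) x (t n)) has_real_derivative D) (at k) \<and>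
            abs (D - 2 / ln 2 * ln (real n) ^ 2) \<le> C * ln (real n) * ln (ln (real n))))"
proof -
  obtain B where "\<forall>\<^sub>F n in sequentially. \<bar>real (t n) - alpha0 (real n)\<bar> \<le> B"
    using t_close by blast
  from eventually_conj[OF this eventually_derivative_bounds[OF c, of B]]
  obtain N where N: "\<forall>n\<ge>N. \<bar>real (t n) - alpha0 (real n)\<bar> \<le> B \<and> (\<forall>T k. \<bar>real T - alpha0 (real n)\<bar> \<le> B \<and>
      0 < k \<and> c1 \<le> real T - real n / k \<and> real T - real n / k \<le> c2 \<longrightarrow> derivative_bounds (real n) k T)"
    unfolding eventually_sequentially by blast
  show ?thesis
    by (rule exI[of _ "1/4"], rule exI[of _ 72], rule exI[of _ "1/4"], rule exI[of _ 12],
        rule exI[of _ "10 / ln 2"], rule exI[of _ N]) (use N in \<open>simp add: derivative_bounds_def\<close>)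
qed

end
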